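(* For every $F\in\mathbb{N}$, the number $\mathrm{nF}(F)$ of reflective numerical semigroups with Frobenius number $F$ satisfies \[ \mathrm{nF}(F)=1-\tau_e(F)+\sum_{k=2}^{F}(-1)^k\left\lfloor \frac{F}{k}\right\rfloor, \] where $\tau_e(F)$ is the number of even positive divisors of $F$.
   Context: A numerical semigroup is a submonoid $S$ of $(\mathbb{N}_0,+)$ with finite complement; its genus is the number of elements of $\mathbb{N}_0\setminus S$ and its Frobenius number is its largest gap. A numerical semigroup $S$ of genus $g\ge1$ is called reflective if for every $z\in\{0,1,\dots,g-1\}$ exactly one of $z$ and $z+g$ belongs to $S$. *)

theory Defs
  imports Main
begin

definition numerical_semigroup :: "nat set \<Rightarrow> bool" where
  "numerical_semigroup S \<longleftrightarrow>
     0 \<in> S \<and> (\<forall>a\<in>S. \<forall>b\<in>S. a + b \<in> S) \<and> finite (UNIV - S)"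

definition genus :: "nat set \<Rightarrow> nat" where
  "genus S = card (UNIV - S)"

definition is_frobenius_number :: "nat set \<Rightarrow> nat \<Rightarrow> bool" where
  "is_frobenius_number S F \<longleftrightarrow> F \<notin> S \<and> (\<forall>x. F < x \<longrightarrow> x \<in> S)"

definition reflective :: "nat set \<Rightarrow> bool" where
  "reflective S \<longleftrightarrow> numerical_semigroup S \<and> genus S \<ge> 1 \<and>
     (\<forall>z < genus S. (z \<in> S) \<noteq> (z + genus S \<in> S))"

definition nF :: "nat \<Rightarrow> nat" where
  "nF F = card {S. reflective S \<and> is_frobenius_number S F}"

definition tau_e :: "nat \<Rightarrow> nat" where
  "tau_e F = card {d. 0 < d \<and> d dvd F \<and> even d}"

end

theory Submission
  imports Defs
begin

text \<open>
  A reflective semigroup S of genus g is determined by its multiplicity m (least positive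
  element): below g it consists of the multiples of m, on [g, 2g) it is the complement of
  those multiples shifted by g, and from 2g on it contains everything. Conversely every such
  set with 0 < m, m not dividing g and m \<le> g + 1 is reflective, with Frobenius number
  g + m (g div m). Writing g = qm + r with 0 < r < m, the Frobenius number is F = 2qm + r;
  q = 0 gives the single semigroup {0} \<union> (F, \<infinity>), and for q \<ge> 1 the admissible m
  are those with 2qm < F < (2q+1)m, of which there are \<lfloor>(F-1)/2q\<rfloor> - \<lfloor>F/(2q+1)\<rfloor>.
  Summing over q and pairing the even and odd terms gives the formula.
\<close>

lemma frobenius_number_unique:
  "is_frobenius_number S F \<Longrightarrow> is_frobenius_number S F' \<Longrightarrow> F = F'"
  unfolding is_frobenius_number_def by (metis linorder_neq_iff)

lemma numerical_semigroup_mult_closed: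
  assumes "numerical_semigroup S" "m \<in> S"
  shows "m * j \<in> S"
proof (induction j)
  case 0
  then show ?case using assms by (simp add: numerical_semigroup_def)
next
  case (Suc j)
  then show ?case using assms by (simp add: numerical_semigroup_def)
qed

lemma reflective_ge_double_genus:
  assumes "reflective S" and "2 * genus S \<le> x"
  shows "x \<in> S"
proof -
  define g where "g = genus S"
  have fin: "finite (UNIV - S)" and refl: "\<forall>z<g. (z \<in> S) \<noteq> (z + g \<in> S)"
    using assms(1) by (auto simp: reflective_def numerical_semigroup_def g_def)
  define gap where "gap z = (if z \<in> S then z + g else z)" for z
  have "gap ` {..<g} \<subseteq> UNIV - S" using refl by (auto simp: gap_def)
  moreover have "inj_on gap {..<g}" unfolding inj_on_def gap_def by auto
  then have "card (gap ` {..<g}) = card (UNIV - S)"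
    by (simp add: card_image g_def genus_def)
  ultimately have "gap ` {..<g} = UNIV - S" using fin card_subset_eq by blast
  moreover have "x \<notin> gap ` {..<g}" using assms(2) by (auto simp: gap_def g_def)
  ultimately show ?thesis by blast
qed

lemma reflective_diff_closed:
  assumes r: "reflective S" and "a \<in> S" "b \<in> S" "a \<le> b" "b < genus S"
  shows "b - a \<in> S"
proof (rule ccontr)
  assume "b - a \<notin> S"
  let ?g = "genus S"
  have ns: "numerical_semigroup S" and rf: "\<forall>z<?g. (z \<in> S) \<noteq> (z + ?g \<in> S)"
    using r by (auto simp: reflective_def)
  have "b - a + ?g \<in> S" using rf[rule_format, of "b - a"] \<open>b - a \<notin> S\<close> \<open>b < ?g\<close> by simp
  then have "a + (b - a + ?g) \<in> S" using \<open>a \<in> S\<close> ns by (simp add: numerical_semigroup_def)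
  then have "b + ?g \<in> S" using \<open>a \<le> b\<close> by simp
  then show False using rf[rule_format, of b] \<open>b \<in> S\<close> \<open>b < ?g\<close> by simp
qed

subsection \<open>The reflective semigroup with given multiplicity and genus\<close>

definition reflective_sg :: "nat \<Rightarrow> nat \<Rightarrow> nat set" where
  "reflective_sg m g = {x. (x < g \<and> m dvd x) \<or> (g \<le> x \<and> \<not> (m dvd (x - g) \<and> x < 2 * g))}"

lemma gaps_reflective_sg:
  "UNIV - reflective_sg m g = (\<lambda>z. if m dvd z then z + g else z) ` {..<g}"
proof (rule set_eqI)
  fix x
  show "x \<in> UNIV - reflective_sg m g \<longleftrightarrow> x \<in> (\<lambda>z. if m dvd z then z + g else z) ` {..<g}"
  proof
    assume x: "x \<in> UNIV - reflective_sg m g"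
    show "x \<in> (\<lambda>z. if m dvd z then z + g else z) ` {..<g}"
    proof (cases "x < g")
      case True
      then show ?thesis using x by (intro image_eqI[of _ _ x]) (auto simp: reflective_sg_def)
    next
      case False
      then show ?thesis using x by (intro image_eqI[of _ _ "x - g"]) (auto simp: reflective_sg_def)
    qed
  qed (auto simp: reflective_sg_def split: if_splits)
qed

lemma genus_reflective_sg: "genus (reflective_sg m g) = g"
proof -
  have "inj_on (\<lambda>z. if m dvd z then z + g else z) {..<g}"
    unfolding inj_on_def by auto
  from card_image[OF this] show ?thesis unfolding genus_def gaps_reflective_sg by simp
qed

lemma numerical_semigroup_reflective_sg:
  assumes "\<not> m dvd g"
  shows "numerical_semigroup (reflective_sg m g)"
proof -
  let ?S = "reflective_sg m g"
  have add_low: "a + b \<in> ?S" if "a \<in> ?S" "b \<in> ?S" "a < g" for a b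
  proof -
    have "m dvd a" using that by (simp add: reflective_sg_def)
    show ?thesis
    proof (cases "b < g")
      case True
      then have ab: "m dvd (a + b)" using \<open>m dvd a\<close> that(2) by (simp add: reflective_sg_def)
      have "\<not> m dvd (a + b - g)" if "g \<le> a + b"
        using ab assms that by (metis diff_diff_cancel dvd_diff_nat)
      then show ?thesis using ab by (auto simp: reflective_sg_def)
    next
      case False
      have "m dvd (a + (b - g)) \<longleftrightarrow> m dvd (b - g)" using \<open>m dvd a\<close> by (rule dvd_add_right_iff)
      then show ?thesis using False that(2) by (auto simp: reflective_sg_def)
    qed
  qed
  have "a + b \<in> ?S" if "a \<in> ?S" "b \<in> ?S" for a b
    using add_low[OF that] add_low[OF that(2,1)] that
    by (cases "a < g"; cases "b < g") (auto simp: reflective_sg_def add.commute)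
  moreover have "0 < g" using assms by (cases g) auto
  then have "0 \<in> ?S" by (simp add: reflective_sg_def)
  ultimately show ?thesis unfolding numerical_semigroup_def gaps_reflective_sg by blast
qed

lemma reflective_reflective_sg:
  assumes "\<not> m dvd g"
  shows "reflective (reflective_sg m g)"
proof -
  have "0 < g" using assms by (cases g) auto
  then show ?thesis
    unfolding reflective_def genus_reflective_sg
    using numerical_semigroup_reflective_sg[OF assms] by (auto simp: reflective_sg_def)
qed

lemma frobenius_number_reflective_sg:
  assumes m: "0 < m" and nd: "\<not> m dvd g"
  shows "is_frobenius_number (reflective_sg m g) (g + m * (g div m))"
proof -
  have lt: "m * (g div m) < g" and lt2: "g < m * (g div m) + m"
    using m nd by (metis div_mult_mod_eq dvd_eq_mod_eq_0 less_add_same_cancel1 mod_less_divisor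
        add_less_cancel_left add.commute mult.commute neq0_conv)+
  have "x \<in> reflective_sg m g" if x: "g + m * (g div m) < x" for x
  proof (cases "m dvd (x - g)")
    case True
    then obtain j where j: "x - g = m * j" by auto
    then have "m * (g div m) < m * j" using x by linarith
    then have "m * (g div m) + m \<le> m * j"
      by (metis Suc_leI mult_Suc_right add.commute mult_le_mono2 mult_less_cancel1)
    then show ?thesis using j lt2 by (auto simp: reflective_sg_def)
  qed (use x in \<open>auto simp: reflective_sg_def\<close>)
  then show ?thesis using lt unfolding is_frobenius_number_def by (auto simp: reflective_sg_def)
qed

text \<open>The bound m \<le> g + 1 matters: every m > g gives the same set {0} \<union> (g, \<infinity>).\<close>

lemma multiplicity_reflective_sg:
  assumes "0 < m" "m \<le> g + 1" "\<not> m dvd g"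
  shows "m \<in> reflective_sg m g" and "\<And>x. 0 < x \<Longrightarrow> x < m \<Longrightarrow> x \<notin> reflective_sg m g"
proof -
  have "0 < g" using assms(3) by (cases g) auto
  have "m \<noteq> g" using assms(3) by auto
  with \<open>0 < g\<close> have "\<not> m < g \<Longrightarrow> m - g = 1 \<and> \<not> m dvd 1" using assms(2) by auto
  then show "m \<in> reflective_sg m g" by (auto simp: reflective_sg_def)
  show "x \<notin> reflective_sg m g" if "0 < x" "x < m" for x
    using that assms \<open>m \<noteq> g\<close> by (auto simp: reflective_sg_def dest: dvd_imp_le)
qed

lemma reflective_sg_inject:
  assumes "0 < m" "m \<le> g + 1" "\<not> m dvd g" "0 < m'" "m' \<le> g' + 1" "\<not> m' dvd g'"
    and eq: "reflective_sg m g = reflective_sg m' g'"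
  shows "m = m' \<and> g = g'"
proof -
  have "g = g'" using genus_reflective_sg eq by metis
  moreover have "\<not> m < m'" "\<not> m' < m"
    using multiplicity_reflective_sg[OF assms(1-3)] multiplicity_reflective_sg[OF assms(4-6)]
      eq assms(1,4) by metis+
  ultimately show ?thesis by simp
qed

lemma reflective_eq_reflective_sg:
  assumes r: "reflective S"
  obtains m where "0 < m" "m \<le> genus S + 1" "\<not> m dvd genus S" "S = reflective_sg m (genus S)"
proof -
  define g where "g = genus S"
  have ns: "numerical_semigroup S" and rf: "\<And>z. z < g \<Longrightarrow> (z \<in> S) \<longleftrightarrow> z + g \<notin> S"
    and "1 \<le> g"
    using r by (auto simp: reflective_def g_def)
  have big: "x \<in> S" if "2 * g \<le> x" for x
    using reflective_ge_double_genus[OF r] that by (simp add: g_def)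
  have mult: "a \<in> S \<Longrightarrow> a * j \<in> S" for a j
    using numerical_semigroup_mult_closed[OF ns] .
  have "0 \<in> S" using ns by (simp add: numerical_semigroup_def)
  then have "g \<notin> S" using rf[of 0] \<open>1 \<le> g\<close> by simp
  define m where "m = (LEAST x. 0 < x \<and> x \<in> S)"
  have "0 < 2 * g \<and> 2 * g \<in> S" using big \<open>1 \<le> g\<close> by simp
  then have m: "0 < m \<and> m \<in> S" unfolding m_def by (rule LeastI)
  have m_least: "m \<le> x" if "0 < x" "x \<in> S" for x
    using that unfolding m_def by (simp add: Least_le)
  have low: "x \<in> S \<longleftrightarrow> m dvd x" if "x < g" for x
  proof
    assume "x \<in> S"
    have "m * (x div m) \<in> S" using mult m by blast
    then have "x - m * (x div m) \<in> S"
      using reflective_diff_closed[OF r _ \<open>x \<in> S\<close>] \<open>x < g\<close> by (simp add: g_def)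
    then have "x mod m \<in> S" by (simp add: minus_mult_div_eq_mod)
    moreover have "x mod m < m" using m by simp
    ultimately have "x mod m = 0" using m_least[of "x mod m"] by linarith
    then show "m dvd x" by auto
  next
    assume "m dvd x"
    then show "x \<in> S" using mult m by (auto elim: dvdE)
  qed
  have nd: "\<not> m dvd g"
    using \<open>g \<notin> S\<close> mult m by (auto elim: dvdE)
  have "S = reflective_sg m g"
  proof (rule set_eqI)
    fix x
    consider "x < g" | "g \<le> x" "x < 2 * g" | "2 * g \<le> x" by linarith
    then show "x \<in> S \<longleftrightarrow> x \<in> reflective_sg m g"
    proof cases
      case 2
      then have "x \<in> S \<longleftrightarrow> x - g \<notin> S" using rf[of "x - g"] by simp
      then show ?thesis using 2 low[of "x - g"] by (auto simp: reflective_sg_def)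
    qed (use low big in \<open>auto simp: reflective_sg_def\<close>)
  qed
  moreover have "m \<le> g + 1"
  proof -
    have "1 \<notin> S" using mult[of 1 g] \<open>g \<notin> S\<close> by auto
    then have "g + 1 \<in> S" using rf[of 1] big[of "g + 1"] \<open>1 \<le> g\<close> by (cases "g = 1") auto
    then show ?thesis using m_least by simp
  qed
  ultimately show thesis using that[of m] m nd unfolding g_def by blast
qed

definition reflective_params :: "nat \<Rightarrow> (nat \<times> nat) set" where
  "reflective_params F = {(m, g). 0 < m \<and> m \<le> g + 1 \<and> \<not> m dvd g \<and> g + m * (g div m) = F}"

lemma nF_eq_card_reflective_params: "nF F = card (reflective_params F)"
proof -
  let ?S = "\<lambda>(m, g). reflective_sg m g"
  have "{S. reflective S \<and> is_frobenius_number S F} = ?S ` reflective_params F"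
  proof (intro equalityI subsetI)
    fix S assume "S \<in> {S. reflective S \<and> is_frobenius_number S F}"
    then have r: "reflective S" and f: "is_frobenius_number S F" by auto
    obtain m where m: "0 < m" "m \<le> genus S + 1" "\<not> m dvd genus S"
      "S = reflective_sg m (genus S)"
      using reflective_eq_reflective_sg[OF r] .
    have "is_frobenius_number S (genus S + m * (genus S div m))"
      using frobenius_number_reflective_sg[OF m(1,3)] m(4)[symmetric] by simp
    then have "(m, genus S) \<in> reflective_params F"
      using frobenius_number_unique[OF f] m by (simp add: reflective_params_def)
    then show "S \<in> ?S ` reflective_params F" using m(4) by force
  qed (auto simp: reflective_params_def reflective_reflective_sg frobenius_number_reflective_sg)
  moreover have "inj_on ?S (reflective_params F)"
    by (rule inj_onI) (auto simp: reflective_params_def dest: reflective_sg_inject)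
  ultimately show ?thesis unfolding nF_def by (simp add: card_image)
qed

text \<open>Pairs (k, m) with k = 2 (g div m); the pair (F + 1, F) is the case g div m = 0.\<close>

definition quotient_pairs :: "nat \<Rightarrow> (nat \<times> nat) set" where
  "quotient_pairs F = Sigma {k \<in> {2..F}. even k} (\<lambda>k. {m. k * m < F \<and> F < (k + 1) * m})"

lemma quotient_pairsD:
  assumes "(k, m) \<in> quotient_pairs F"
  shows "0 < m" "m \<le> F" "k div 2 * m < F" "(m, F - k div 2 * m) \<in> reflective_params F"
proof -
  obtain q where k: "k = 2 * q" "1 \<le> q" and lo: "2 * q * m < F" and hi: "F < (2 * q + 1) * m"
    using assms by (auto simp: quotient_pairs_def elim!: evenE)
  define r where "r = F - 2 * q * m"
  have r: "F = 2 * q * m + r" "0 < r" "r < m" using lo hi by (auto simp: r_def algebra_simps)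
  have g: "F - k div 2 * m = r + q * m" using r k by (simp add: algebra_simps)
  show "0 < m" using r by simp
  have mq: "m \<le> q * m" "q * m \<le> 2 * q * m" using k by simp_all
  moreover have "k div 2 = q" using k by simp
  ultimately show "m \<le> F" "k div 2 * m < F" using r by (linarith, simp)
  have "(r + q * m) div m = q" "(r + q * m) mod m = r" using r by simp_all
  then have "\<not> m dvd r + q * m" "r + q * m + m * ((r + q * m) div m) = F"
    using r by (auto simp: dvd_eq_mod_eq_0 algebra_simps)
  moreover have "m \<le> r + q * m + 1" using mq by linarith
  ultimately show "(m, F - k div 2 * m) \<in> reflective_params F"
    unfolding g reflective_params_def using r by simp
qed

lemma reflective_params_eq:
  assumes "0 < F"
  shows "reflective_params F =
     insert (F + 1, F) ((\<lambda>(k, m). (m, F - k div 2 * m)) ` quotient_pairs F)"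
proof (intro equalityI subsetI)
  fix p assume "p \<in> reflective_params F"
  then obtain m g where p: "p = (m, g)" and m: "0 < m" "m \<le> g + 1" "\<not> m dvd g"
    and F: "g + m * (g div m) = F"
    by (auto simp: reflective_params_def)
  show "p \<in> insert (F + 1, F) ((\<lambda>(k, m). (m, F - k div 2 * m)) ` quotient_pairs F)"
  proof (cases "g < m")
    case True
    then show ?thesis using p m F by simp
  next
    case False
    define q where "q = g div m"
    define r where "r = g mod m"
    have g: "g = q * m + r" by (simp add: q_def r_def)
    have "0 < r" "r < m" using m by (auto simp: r_def dvd_eq_mod_eq_0)
    have "1 \<le> q" using False m(1) div_greater_zero_iff[of g m] by (simp add: q_def)
    have "F = g + m * q" using F by (simp add: q_def)
    then have F': "F = 2 * q * m + r" using g by (simp add: algebra_simps)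
    have "2 * q \<le> 2 * q * m" using m(1) by simp
    then have "2 * q \<le> F" using F' by linarith
    then have "(2 * q, m) \<in> quotient_pairs F"
      using F' \<open>1 \<le> q\<close> \<open>0 < r\<close> \<open>r < m\<close> by (auto simp: quotient_pairs_def algebra_simps)
    moreover have "F - 2 * q div 2 * m = g" using F' g by simp
    ultimately show ?thesis using p by force
  qed
next
  fix p assume "p \<in> insert (F + 1, F) ((\<lambda>(k, m). (m, F - k div 2 * m)) ` quotient_pairs F)"
  then consider "p = (F + 1, F)" | k m where "(k, m) \<in> quotient_pairs F" "p = (m, F - k div 2 * m)"
    by auto
  then show "p \<in> reflective_params F"
  proof cases
    case 1
    have "\<not> F + 1 dvd F" using assms by (auto dest: dvd_imp_le)
    then show ?thesis using 1 by (simp add: reflective_params_def)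
  qed (simp add: quotient_pairsD(4))
qed

lemma card_reflective_params:
  assumes "0 < F"
  shows "card (reflective_params F) = card (quotient_pairs F) + 1"
proof -
  let ?h = "\<lambda>(k, m). (m, F - k div 2 * m)"
  have "quotient_pairs F \<subseteq> {..F} \<times> {..F}"
  proof clarify
    fix k m assume km: "(k, m) \<in> quotient_pairs F"
    then show "k \<in> {..F} \<and> m \<in> {..F}"
      using quotient_pairsD(2)[OF km] by (simp add: quotient_pairs_def)
  qed
  then have "finite (quotient_pairs F)" by (rule finite_subset) simp
  moreover have "inj_on ?h (quotient_pairs F)"
  proof (rule inj_onI, clarsimp)
    fix k k' m
    assume k: "(k, m) \<in> quotient_pairs F" and k': "(k', m) \<in> quotient_pairs F"
      and "F - k div 2 * m = F - k' div 2 * m"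
    then have "k div 2 * m = k' div 2 * m"
      using quotient_pairsD(3)[OF k] quotient_pairsD(3)[OF k'] by linarith
    then have "k div 2 = k' div 2" using quotient_pairsD(1)[OF k] by simp
    moreover have "even k" "even k'" using k k' by (auto simp: quotient_pairs_def)
    ultimately show "k = k'" by (metis dvd_mult_div_cancel)
  qed
  moreover have "(F + 1, F) \<notin> ?h ` quotient_pairs F" using quotient_pairsD(2) by fastforce
  ultimately show ?thesis unfolding reflective_params_eq[OF assms] by (simp add: card_image)
qed

lemma card_mult_interval:
  assumes "0 < k" "0 < F"
  shows "int (card {m. k * m < F \<and> F < (k + 1) * m}) =
    int (F div k) - int (F div (k + 1)) - (if k dvd F then 1 else 0)"
proof -
  have "k * m < F \<longleftrightarrow> m \<le> (F - 1) div k" for m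
    using assms by (simp add: less_eq_div_iff_mult_less_eq mult.commute) linarith
  moreover have "F < (k + 1) * m \<longleftrightarrow> F div (k + 1) < m" for m
    by (simp add: div_less_iff_less_mult mult.commute)
  ultimately have "{m. k * m < F \<and> F < (k + 1) * m} = {F div (k + 1)<..(F - 1) div k}"
    by auto
  moreover have "F div (k + 1) \<le> (F - 1) div k"
  proof (cases "F div (k + 1) = 0")
    case False
    have "F div (k + 1) * (k + 1) \<le> F" by (rule div_times_less_eq_dividend)
    then have "F div (k + 1) * k \<le> F - 1" using False by (simp add: algebra_simps)
    then show ?thesis using assms by (simp add: less_eq_div_iff_mult_less_eq)
  qed simp
  moreover have "F div k = (F - 1) div k + (if k dvd F then 1 else 0)"
    using div_Suc[of "F - 1" k] assms by (simp add: dvd_eq_mod_eq_0)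
  ultimately show ?thesis by simp
qed

lemma sum_alternating_eq_sum_even:
  fixes a :: "nat \<Rightarrow> int"
  assumes "1 \<le> n"
  shows "(\<Sum>k = 2..n. (-1) ^ k * a k) =
         (\<Sum>k = 2..n. (if even k then a k - a (k + 1) else 0)) + (if even n then a (n + 1) else 0)"
  using assms
proof (induction n rule: nat_induct_at_least)
  case (Suc n)
  then show ?case by (auto simp: sum.cl_ivl_Suc)
qed simp

lemma tau_e_eq_card:
  assumes "0 < F"
  shows "tau_e F = card {k \<in> {2..F}. even k \<and> k dvd F}"
proof -
  have "{d. 0 < d \<and> d dvd F \<and> even d} = {k \<in> {2..F}. even k \<and> k dvd F}"
    using assms by (auto dest: dvd_imp_le elim!: evenE)
  then show ?thesis by (simp add: tau_e_def)
qed

lemma card_quotient_pairs: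
  assumes "0 < F"
  shows "int (card (quotient_pairs F)) = (\<Sum>k = 2..F. (-1) ^ k * int (F div k)) - int (tau_e F)"
proof -
  define K where "K = {k \<in> {2..F}. even k}"
  have fiber_finite: "finite {m. k * m < F \<and> F < (k + 1) * m}" if "k \<in> K" for k
  proof (rule finite_subset)
    show "{m. k * m < F \<and> F < (k + 1) * m} \<subseteq> {..F}"
      using that by (auto simp: K_def) (metis le_trans less_imp_le_nat mult_le_mono1 mult_1 one_le_numeral)
  qed simp
  have "card (quotient_pairs F) = (\<Sum>k\<in>K. card {m. k * m < F \<and> F < (k + 1) * m})"
    unfolding quotient_pairs_def K_def[symmetric]
    using fiber_finite by (intro card_SigmaI) (simp_all add: K_def)
  then have "int (card (quotient_pairs F)) = (\<Sum>k\<in>K. int (card {m. k * m < F \<and> F < (k + 1) * m}))"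
    by simp
  also have "\<dots> = (\<Sum>k\<in>K. int (F div k) - int (F div (k + 1))) - (\<Sum>k\<in>K. if k dvd F then 1 else 0)"
    using card_mult_interval assms by (simp add: K_def sum_subtractf)
  also have "(\<Sum>k\<in>K. int (F div k) - int (F div (k + 1))) = (\<Sum>k = 2..F. (-1) ^ k * int (F div k))"
    unfolding K_def sum.inter_filter[OF finite_atLeastAtMost]
    using sum_alternating_eq_sum_even[of F "\<lambda>k. int (F div k)"] assms by simp
  also have "(\<Sum>k\<in>K. if k dvd F then 1 else 0) = int (tau_e F)"
    unfolding tau_e_eq_card[OF assms] K_def by (simp add: sum.If_cases Collect_conj_eq Int_assoc)
  finally show ?thesis .
qed

theorem mainTheorem19:
  fixes F :: nat
  assumes "F \<ge> 1"
  shows "int (nF F) = 1 - int (tau_e F) + (\<Sum>k = 2..F. (-1) ^ k * int (F div k))"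
proof -
  have "0 < F" using assms by simp
  have "int (nF F) = int (card (quotient_pairs F)) + 1"
    unfolding nF_eq_card_reflective_params card_reflective_params[OF \<open>0 < F\<close>] by simp
  then show ?thesis using card_quotient_pairs[OF \<open>0 < F\<close>] by simp
qed

end
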